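(* Let $\Lambda$ be diagonal with entries in $[0,1]$ and let $W^{(1)},W^{(2)}\ge 0$ entrywise with $W^{(1)}+W^{(2)}$ row-stochastic. Let $\bar A_d:=\begin{pmatrix}0 & I\\ \Lambda W^{(2)} & \Lambda W^{(1)}\end{pmatrix}$ and $\bar A:=\Lambda(W^{(1)}+W^{(2)})$. Then $\rho(\bar A_d)\ge\rho(\bar A)$.
   Context: $\rho$ denotes spectral radius. $\rho(\bar A_d)$ governs the convergence rate of the FJ-MM system $x(t+1)=\Lambda(W^{(1)}x(t)+W^{(2)}x(t-1))+(I-\Lambda)s$ and $\rho(\bar A)$ that of the comparison FJ system $x(t+1)=\bar A x(t)+(I-\Lambda)s$. *)

theory Defs
  imports "Jordan_Normal_Form.Spectral_Radius"
begin

definition rho_real :: "real mat \<Rightarrow> real" where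
  "rho_real A = spectral_radius (map_mat complex_of_real A)"

definition FJMM_mat :: "nat \<Rightarrow> real mat \<Rightarrow> real mat \<Rightarrow> real mat \<Rightarrow> real mat" where
  "FJMM_mat n Lam W1 W2 =
     four_block_mat (0\<^sub>m n n) (1\<^sub>m n) (Lam * W2) (Lam * W1)"

definition FJ_mat :: "real mat \<Rightarrow> real mat \<Rightarrow> real mat \<Rightarrow> real mat" where
  "FJ_mat Lam W1 W2 = Lam * (W1 + W2)"

end

theory Submission
  imports Defs
begin

text \<open>
  Let P = Lam W2, Q = Lam W1 and r = rho(P + Q). Because P + Q is nonnegative, the moduli |v| of
  an eigenvector v for an eigenvalue of modulus r satisfy r |v| <= (P + Q) |v|, and as the row sums
  of P + Q are at most 1 this gives r <= 1. The vector z = (|v|, r |v|) then satisfies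
  r z <= A_d z componentwise, so the Collatz-Wielandt bound (for nonnegative M, a nonnegative
  z ~= 0 with r z <= M z forces r <= rho(M)) yields r <= rho(A_d). That bound follows by
  rescaling: if rho(M) < t < r, the powers of M / t stay bounded, whereas
  (M / t)^k z >= (r / t)^k z grows exponentially.
\<close>

lemma mult_mat_vec_index_sum:
  fixes M :: "'a::comm_semiring_0 mat"
  assumes "M \<in> carrier_mat m m" "v \<in> carrier_vec m" "i < m"
  shows "(M *\<^sub>v v) $ i = (\<Sum>j<m. M $$ (i, j) * v $ j)"
  using assms by (auto simp: scalar_prod_def lessThan_atLeast0 intro!: sum.cong)

lemma smult_mat_mult_vec:
  fixes A :: "'a::comm_semiring_0 mat"
  assumes "A \<in> carrier_mat m m" "v \<in> carrier_vec m"
  shows "(c \<cdot>\<^sub>m A) *\<^sub>v v = c \<cdot>\<^sub>v (A *\<^sub>v v)"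
  by (rule eq_vecI) (use assms in auto)

lemma smult_vec_mono:
  fixes v w :: "real vec"
  assumes "0 \<le> c" "v \<le> w"
  shows "c \<cdot>\<^sub>v v \<le> c \<cdot>\<^sub>v w"
  using assms unfolding less_eq_vec_def by (simp add: mult_left_mono)

lemma append_vec_smult:
  "v \<in> carrier_vec n \<Longrightarrow> c \<cdot>\<^sub>v (v @\<^sub>v w) = (c \<cdot>\<^sub>v v) @\<^sub>v (c \<cdot>\<^sub>v w)"
  by (rule eq_vecI) auto

lemma pow_mat_Suc_left:
  fixes M :: "'a::semiring_1 mat"
  assumes M: "M \<in> carrier_mat m m"
  shows "M ^\<^sub>m Suc k = M * M ^\<^sub>m k"
proof (induction k)
  case (Suc k)
  have "M ^\<^sub>m Suc (Suc k) = (M * M ^\<^sub>m k) * M" using Suc by simp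
  also have "\<dots> = M * (M ^\<^sub>m k * M)" using M by (simp add: assoc_mult_mat[of _ m m _ m _ m])
  finally show ?case by simp
qed (use M in simp)

lemma diagonal_mat_mult_index:
  fixes D W :: "'a::comm_semiring_0 mat"
  assumes D: "D \<in> carrier_mat n n" and W: "W \<in> carrier_mat n n"
    and "diagonal_mat D" and i: "i < n" and j: "j < n"
  shows "(D * W) $$ (i, j) = D $$ (i, i) * W $$ (i, j)"
proof -
  have "(D * W) $$ (i, j) = (\<Sum>k<n. D $$ (i, k) * W $$ (k, j))"
    using D W i j by (auto simp: scalar_prod_def lessThan_atLeast0 intro!: sum.cong)
  also have "\<dots> = (\<Sum>k<n. if k = i then D $$ (i, i) * W $$ (i, j) else 0)"
    using assms unfolding diagonal_mat_def by (intro sum.cong) auto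
  finally show ?thesis using i by simp
qed

lemma diagonal_mat_nonneg:
  fixes D :: "real mat"
  assumes "D \<in> carrier_mat n n" "diagonal_mat D" "\<And>i. i < n \<Longrightarrow> 0 \<le> D $$ (i, i)"
  shows "0\<^sub>m n n \<le> D"
proof -
  have "0 \<le> D $$ (i, j)" if "i < n" "j < n" for i j
    using assms that unfolding diagonal_mat_def by (cases "i = j") auto
  then show ?thesis using assms(1) by (auto simp: less_eq_mat_def)
qed

lemma mult_mat_nonneg:
  fixes A B :: "real mat"
  assumes "A \<in> carrier_mat m m" "B \<in> carrier_mat m m" "0\<^sub>m m m \<le> A" "0\<^sub>m m m \<le> B"
  shows "0\<^sub>m m m \<le> A * B"
  unfolding less_eq_mat_def
proof (intro conjI allI impI)
  fix i j assume "i < dim_row (A * B)" "j < dim_col (A * B)"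
  with assms show "0\<^sub>m m m $$ (i, j) \<le> (A * B) $$ (i, j)"
    by (auto simp: less_eq_mat_def scalar_prod_def intro!: sum_nonneg)
qed (use assms in auto)

lemma mult_mat_vec_nonneg:
  fixes M :: "real mat"
  assumes "M \<in> carrier_mat m m" "v \<in> carrier_vec m" "0\<^sub>m m m \<le> M" "0\<^sub>v m \<le> v"
  shows "0\<^sub>v m \<le> M *\<^sub>v v"
  unfolding less_eq_vec_def
proof (intro conjI allI impI)
  fix i assume "i < dim_vec (M *\<^sub>v v)"
  then have i: "i < m" using assms(1) by simp
  have "0 \<le> (\<Sum>j<m. M $$ (i, j) * v $ j)"
    using assms(1-4) i by (auto simp: less_eq_vec_def less_eq_mat_def intro!: sum_nonneg)
  then show "0\<^sub>v m $ i \<le> (M *\<^sub>v v) $ i"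
    using i by (simp add: mult_mat_vec_index_sum[OF assms(1,2) i])
qed (use assms in simp)

lemma mult_mat_vec_mono:
  fixes M :: "real mat"
  assumes "M \<in> carrier_mat m m" "0\<^sub>m m m \<le> M" "v \<le> w" "w \<in> carrier_vec m"
  shows "M *\<^sub>v v \<le> M *\<^sub>v w"
proof -
  have v: "v \<in> carrier_vec m"
    using assms(3,4) unfolding less_eq_vec_def carrier_vec_def by simp
  show ?thesis
    unfolding less_eq_vec_def
  proof (intro conjI allI impI)
    fix i assume "i < dim_vec (M *\<^sub>v w)"
    then have i: "i < m" using assms(1) by simp
    have "M $$ (i, j) * v $ j \<le> M $$ (i, j) * w $ j" if "j < m" for j
      using assms(1-4) i that by (intro mult_left_mono) (auto simp: less_eq_vec_def less_eq_mat_def)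
    then show "(M *\<^sub>v v) $ i \<le> (M *\<^sub>v w) $ i"
      unfolding mult_mat_vec_index_sum[OF assms(1) v i] mult_mat_vec_index_sum[OF assms(1,4) i]
      by (intro sum_mono) simp
  qed (use assms(1) in simp)
qed

lemma nonneg_vec_pos_index:
  fixes z :: "real vec"
  assumes "z \<in> carrier_vec m" "0\<^sub>v m \<le> z" "z \<noteq> 0\<^sub>v m"
  obtains i where "i < m" "0 < z $ i"
proof -
  obtain i where "i < m" "z $ i \<noteq> 0"
    using assms(1,3) by (metis carrier_vecD eq_vecI index_zero_vec(1,2))
  moreover have "0 \<le> z $ i" using assms(2) \<open>i < m\<close> by (auto simp: less_eq_vec_def)
  ultimately show thesis using that by simp
qed

lemma pow_mat_mult_vec_ge:
  fixes M :: "real mat"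
  assumes M: "M \<in> carrier_mat m m" "0\<^sub>m m m \<le> M" and z: "z \<in> carrier_vec m"
    and q: "0 \<le> q" "q \<cdot>\<^sub>v z \<le> M *\<^sub>v z"
  shows "q ^ k \<cdot>\<^sub>v z \<le> M ^\<^sub>m k *\<^sub>v z"
proof (induction k)
  case 0
  show ?case using M z by simp
next
  case (Suc k)
  have Mkz: "M ^\<^sub>m k *\<^sub>v z \<in> carrier_vec m"
    by (rule mult_mat_vec_carrier[OF pow_carrier_mat[OF M(1)] z])
  have "q ^ Suc k \<cdot>\<^sub>v z = q ^ k \<cdot>\<^sub>v (q \<cdot>\<^sub>v z)"
    by (simp add: smult_smult_assoc mult.commute)
  also have "\<dots> \<le> q ^ k \<cdot>\<^sub>v (M *\<^sub>v z)"
    using q by (intro smult_vec_mono) simp_all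
  also have "\<dots> = M *\<^sub>v (q ^ k \<cdot>\<^sub>v z)"
    using M z by (simp add: mult_mat_vec)
  also have "\<dots> \<le> M *\<^sub>v (M ^\<^sub>m k *\<^sub>v z)"
    using M Suc Mkz by (rule mult_mat_vec_mono)
  also have "\<dots> = M ^\<^sub>m Suc k *\<^sub>v z"
    by (simp only: pow_mat_Suc_left[OF M(1)] assoc_mult_mat_vec[OF M(1) pow_carrier_mat[OF M(1)] z])
  finally show ?case .
qed

lemma rho_real_nonneg:
  assumes "M \<in> carrier_mat m m" "0 < m"
  shows "0 \<le> rho_real M"
  using spectral_radius_mem_max(1)[of "map_mat complex_of_real M" m] assms
  unfolding rho_real_def by auto

lemma spectral_radius_smult_ge:
  fixes A :: "complex mat"
  assumes A: "A \<in> carrier_mat n n" and n: "0 < n"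
  shows "norm c * spectral_radius A \<le> spectral_radius (c \<cdot>\<^sub>m A)"
proof -
  obtain l where l: "l \<in> spectrum A" "spectral_radius A = norm l"
    using spectral_radius_mem_max(1)[OF A n] by auto
  then obtain v where "eigenvector A v l"
    unfolding spectrum_def eigenvalue_def by auto
  then have v: "v \<in> carrier_vec n" "v \<noteq> 0\<^sub>v n" "A *\<^sub>v v = l \<cdot>\<^sub>v v"
    using A unfolding eigenvector_def by auto
  have "(c \<cdot>\<^sub>m A) *\<^sub>v v = (c * l) \<cdot>\<^sub>v v"
    using A v by (simp add: smult_mat_mult_vec smult_smult_assoc)
  then have "eigenvector (c \<cdot>\<^sub>m A) v (c * l)"
    using A v unfolding eigenvector_def by simp
  then have "c * l \<in> spectrum (c \<cdot>\<^sub>m A)"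
    unfolding spectrum_def eigenvalue_def by auto
  then have "norm (c * l) \<le> spectral_radius (c \<cdot>\<^sub>m A)"
    using A n by (intro spectral_radius_mem_max(2)) auto
  then show ?thesis using l(2) by (simp add: norm_mult)
qed

lemma rho_real_smult:
  assumes M: "M \<in> carrier_mat m m" and m: "0 < m" and t: "0 < t"
  shows "rho_real (t \<cdot>\<^sub>m M) = t * rho_real M"
proof -
  have hom: "map_mat complex_of_real (c \<cdot>\<^sub>m A) = complex_of_real c \<cdot>\<^sub>m map_mat complex_of_real A"
    for c and A :: "real mat" by (rule eq_matI) auto
  have ge: "\<bar>c\<bar> * rho_real A \<le> rho_real (c \<cdot>\<^sub>m A)"
    if "A \<in> carrier_mat m m" for c and A :: "real mat"
    using spectral_radius_smult_ge[OF _ m, of "map_mat complex_of_real A" "complex_of_real c"] that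
    unfolding rho_real_def hom by simp
  have "t * rho_real M \<le> rho_real (t \<cdot>\<^sub>m M)"
    using ge[OF M, of t] t by simp
  moreover have "(1 / t) * rho_real (t \<cdot>\<^sub>m M) \<le> rho_real ((1 / t) \<cdot>\<^sub>m (t \<cdot>\<^sub>m M))"
    using ge[of "t \<cdot>\<^sub>m M" "1 / t"] M t by simp
  moreover have "(1 / t) \<cdot>\<^sub>m (t \<cdot>\<^sub>m M) = M"
    using t by (intro eq_matI) auto
  ultimately show ?thesis using t by (simp add: field_simps)
qed

lemma rho_real_less_1_pow_bounded:
  assumes M: "M \<in> carrier_mat m m" and "rho_real M < 1"
  obtains c where "\<And>k i j. i < m \<Longrightarrow> j < m \<Longrightarrow> \<bar>(M ^\<^sub>m k) $$ (i, j)\<bar> \<le> c"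
proof -
  let ?C = "map_mat complex_of_real M"
  obtain c where c: "\<And>k. norm_bound (?C ^\<^sub>m k) c"
    using spectral_radius_jnf_norm_bound_less_1_upper_triangular[of ?C m] assms
    unfolding rho_real_def by auto
  have "\<bar>(M ^\<^sub>m k) $$ (i, j)\<bar> \<le> c" if "i < m" "j < m" for k i j
    using c[of k] that M unfolding norm_bound_def of_real_hom.mat_hom_pow[OF M, symmetric]
    by simp
  then show thesis using that by blast
qed

lemma nonneg_mat_sub_eigenvector:
  fixes A :: "real mat"
  assumes A: "A \<in> carrier_mat n n" "0\<^sub>m n n \<le> A" and n: "0 < n"
  obtains w where "w \<in> carrier_vec n" "0\<^sub>v n \<le> w" "w \<noteq> 0\<^sub>v n" "rho_real A \<cdot>\<^sub>v w \<le> A *\<^sub>v w"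
proof -
  let ?C = "map_mat complex_of_real A"
  have C: "?C \<in> carrier_mat n n" using A by simp
  obtain l where "l \<in> spectrum ?C" and l: "rho_real A = norm l"
    using spectral_radius_mem_max(1)[OF C n] unfolding rho_real_def by auto
  then obtain v where "eigenvector ?C v l"
    unfolding spectrum_def eigenvalue_def by auto
  then have v: "v \<in> carrier_vec n" "v \<noteq> 0\<^sub>v n" "?C *\<^sub>v v = l \<cdot>\<^sub>v v"
    using C unfolding eigenvector_def by auto
  define w where "w = vec n (\<lambda>i. norm (v $ i))"
  have w: "w \<in> carrier_vec n" "0\<^sub>v n \<le> w" unfolding w_def by (auto simp: less_eq_vec_def)
  have "w \<noteq> 0\<^sub>v n"
  proof
    assume w0: "w = 0\<^sub>v n"
    have "v $ i = 0" if "i < n" for i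
    proof -
      have "w $ i = 0" using w0 that by simp
      then show ?thesis using that unfolding w_def by simp
    qed
    then have "v = 0\<^sub>v n" using v(1) by (intro eq_vecI) auto
    then show False using v(2) by contradiction
  qed
  moreover have "rho_real A * w $ i \<le> (A *\<^sub>v w) $ i" if i: "i < n" for i
  proof -
    have "rho_real A * w $ i = norm ((?C *\<^sub>v v) $ i)"
      using v(1,3) i unfolding l w_def by (simp add: norm_mult)
    also have "\<dots> = norm (\<Sum>j<n. ?C $$ (i, j) * v $ j)"
      using mult_mat_vec_index_sum[OF C v(1) i] by simp
    also have "\<dots> \<le> (\<Sum>j<n. norm (?C $$ (i, j) * v $ j))" by (rule norm_sum)
    also have "\<dots> = (\<Sum>j<n. A $$ (i, j) * w $ j)"
      using A i unfolding w_def by (intro sum.cong) (auto simp: norm_mult less_eq_mat_def)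
    also have "\<dots> = (A *\<^sub>v w) $ i" using mult_mat_vec_index_sum[OF A(1) w(1) i] by simp
    finally show ?thesis .
  qed
  then have "rho_real A \<cdot>\<^sub>v w \<le> A *\<^sub>v w" using A(1) w(1) by (auto simp: less_eq_vec_def)
  ultimately show thesis using that w by blast
qed

lemma one_le_rho_real_if_expanding:
  fixes N :: "real mat"
  assumes N: "N \<in> carrier_mat m m" "0\<^sub>m m m \<le> N"
    and z: "z \<in> carrier_vec m" "0\<^sub>v m \<le> z" "z \<noteq> 0\<^sub>v m"
    and q: "1 < q" "q \<cdot>\<^sub>v z \<le> N *\<^sub>v z"
  shows "1 \<le> rho_real N"
proof (rule ccontr)
  assume "\<not> 1 \<le> rho_real N"
  then obtain c where c: "\<And>k i j. i < m \<Longrightarrow> j < m \<Longrightarrow> \<bar>(N ^\<^sub>m k) $$ (i, j)\<bar> \<le> c"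
    using rho_real_less_1_pow_bounded[OF N(1)] by force
  obtain i where i: "i < m" "0 < z $ i" using nonneg_vec_pos_index[OF z] .
  have z_nonneg: "0 \<le> z $ j" if "j < m" for j
    using z(2) that by (auto simp: less_eq_vec_def)
  define S where "S = (\<Sum>j<m. z $ j)"
  obtain k where k: "c * S / z $ i < q ^ k" using real_arch_pow[OF q(1)] by blast
  have "q ^ k * z $ i \<le> (N ^\<^sub>m k *\<^sub>v z) $ i"
    using pow_mat_mult_vec_ge[OF N z(1) _ q(2), of k] q(1) i z(1)
    by (auto simp: less_eq_vec_def)
  also have "\<dots> = (\<Sum>j<m. (N ^\<^sub>m k) $$ (i, j) * z $ j)"
    using mult_mat_vec_index_sum[OF pow_carrier_mat[OF N(1)] z(1) i(1)] .
  also have "\<dots> \<le> (\<Sum>j<m. c * z $ j)"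
  proof (rule sum_mono)
    fix j assume "j \<in> {..<m}"
    then have j: "j < m" by simp
    have "(N ^\<^sub>m k) $$ (i, j) * z $ j \<le> \<bar>(N ^\<^sub>m k) $$ (i, j)\<bar> * z $ j"
      using z_nonneg[OF j] by (intro mult_right_mono) auto
    also have "\<dots> \<le> c * z $ j" using c[OF i(1) j] z_nonneg[OF j] by (rule mult_right_mono)
    finally show "(N ^\<^sub>m k) $$ (i, j) * z $ j \<le> c * z $ j" .
  qed
  also have "\<dots> = c * S" unfolding S_def by (simp add: sum_distrib_left)
  finally show False using k i(2) by (simp add: divide_less_eq)
qed

lemma collatz_wielandt_le_rho_real:
  fixes M :: "real mat"
  assumes M: "M \<in> carrier_mat m m" "0\<^sub>m m m \<le> M"
    and z: "z \<in> carrier_vec m" "0\<^sub>v m \<le> z" "z \<noteq> 0\<^sub>v m"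
    and r: "r \<cdot>\<^sub>v z \<le> M *\<^sub>v z"
  shows "r \<le> rho_real M"
proof (rule ccontr)
  assume "\<not> r \<le> rho_real M"
  moreover have m: "0 < m" using z(1,3) by (cases m) auto
  ultimately have "0 \<le> rho_real M" "rho_real M < r" using rho_real_nonneg[OF M(1)] by auto
  then obtain t where t: "0 < t" "rho_real M < t" "t < r"
    using dense by (metis le_less_trans)
  define N where "N = (1 / t) \<cdot>\<^sub>m M"
  have N: "N \<in> carrier_mat m m" "0\<^sub>m m m \<le> N"
    using M t unfolding N_def by (auto simp: less_eq_mat_def)
  have "(r / t) \<cdot>\<^sub>v z = (1 / t) \<cdot>\<^sub>v (r \<cdot>\<^sub>v z)" by (simp add: smult_smult_assoc)
  also have "\<dots> \<le> (1 / t) \<cdot>\<^sub>v (M *\<^sub>v z)" using t r by (intro smult_vec_mono) auto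
  also have "\<dots> = N *\<^sub>v z" unfolding N_def using M z by (simp add: smult_mat_mult_vec)
  finally have "(r / t) \<cdot>\<^sub>v z \<le> N *\<^sub>v z" .
  moreover have "1 < r / t" using t by simp
  ultimately have "1 \<le> rho_real N" using one_le_rho_real_if_expanding[OF N z] by blast
  moreover have "rho_real N = rho_real M / t"
    unfolding N_def using rho_real_smult[OF M(1) m, of "1 / t"] t by simp
  ultimately show False using t by (simp add: divide_simps)
qed

lemma rho_real_le_row_sum_bound:
  fixes M :: "real mat"
  assumes M: "M \<in> carrier_mat m m" "0\<^sub>m m m \<le> M" and m: "0 < m"
    and rows: "\<And>i. i < m \<Longrightarrow> (\<Sum>j<m. M $$ (i, j)) \<le> c"
  shows "rho_real M \<le> c"
proof -
  obtain w where w: "w \<in> carrier_vec m" "0\<^sub>v m \<le> w" "w \<noteq> 0\<^sub>v m"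
    and sub: "rho_real M \<cdot>\<^sub>v w \<le> M *\<^sub>v w"
    using nonneg_mat_sub_eigenvector[OF M m] .
  have "Max ((\<lambda>j. w $ j) ` {..<m}) \<in> (\<lambda>j. w $ j) ` {..<m}" using m by (intro Max_in) auto
  then obtain k where k: "k < m" "w $ k = Max ((\<lambda>j. w $ j) ` {..<m})" by auto
  then have w_le: "w $ j \<le> w $ k" if "j < m" for j using that by simp
  obtain i where "i < m" "0 < w $ i" using nonneg_vec_pos_index[OF w] .
  then have wk: "0 < w $ k" using w_le by (meson less_le_trans)
  have "rho_real M * w $ k \<le> (M *\<^sub>v w) $ k" using sub k(1) M(1) by (auto simp: less_eq_vec_def)
  also have "\<dots> = (\<Sum>j<m. M $$ (k, j) * w $ j)" using mult_mat_vec_index_sum[OF M(1) w(1) k(1)] .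
  also have "\<dots> \<le> (\<Sum>j<m. M $$ (k, j) * w $ k)"
    using M k(1) w_le by (intro sum_mono mult_left_mono) (auto simp: less_eq_mat_def)
  also have "\<dots> = (\<Sum>j<m. M $$ (k, j)) * w $ k" by (rule sum_distrib_right[symmetric])
  also have "\<dots> \<le> c * w $ k" using rows[OF k(1)] wk by (intro mult_right_mono) auto
  finally show ?thesis using wk by simp
qed

lemma rho_real_diagonal_mult_stochastic_le_1:
  fixes D W :: "real mat"
  assumes D: "D \<in> carrier_mat n n" "diagonal_mat D" "\<And>i. i < n \<Longrightarrow> 0 \<le> D $$ (i, i) \<and> D $$ (i, i) \<le> 1"
    and W: "W \<in> carrier_mat n n" "0\<^sub>m n n \<le> W" "\<And>i. i < n \<Longrightarrow> (\<Sum>j<n. W $$ (i, j)) = 1"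
    and n: "0 < n"
  shows "rho_real (D * W) \<le> 1"
proof (rule rho_real_le_row_sum_bound)
  fix i assume i: "i < n"
  have "(\<Sum>j<n. (D * W) $$ (i, j)) = D $$ (i, i) * (\<Sum>j<n. W $$ (i, j))"
    using diagonal_mat_mult_index[OF D(1) W(1) D(2) i] by (simp add: sum_distrib_left)
  then show "(\<Sum>j<n. (D * W) $$ (i, j)) \<le> 1" using D(3) W(3) i by simp
next
  show "0\<^sub>m n n \<le> D * W"
    using D W diagonal_mat_nonneg[OF D(1,2)] by (intro mult_mat_nonneg) auto
qed (use D W n in auto)

lemma companion_mat_sub_eigenvector:
  fixes P Q :: "real mat"
  assumes P: "P \<in> carrier_mat n n" "0\<^sub>m n n \<le> P" and Q: "Q \<in> carrier_mat n n"
    and w: "w \<in> carrier_vec n" "0\<^sub>v n \<le> w" and r: "0 \<le> r" "r \<le> 1"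
    and sub: "r \<cdot>\<^sub>v w \<le> P *\<^sub>v w + Q *\<^sub>v w"
  shows "r \<cdot>\<^sub>v (w @\<^sub>v r \<cdot>\<^sub>v w) \<le> four_block_mat (0\<^sub>m n n) (1\<^sub>m n) P Q *\<^sub>v (w @\<^sub>v r \<cdot>\<^sub>v w)"
proof -
  have "r \<cdot>\<^sub>v (r \<cdot>\<^sub>v w) \<le> P *\<^sub>v w + r \<cdot>\<^sub>v (Q *\<^sub>v w)"
    unfolding less_eq_vec_def
  proof (intro conjI allI impI)
    fix i assume "i < dim_vec (P *\<^sub>v w + r \<cdot>\<^sub>v (Q *\<^sub>v w))"
    then have i: "i < n" using Q by simp
    have "r * (r * w $ i) \<le> r * ((P *\<^sub>v w) $ i + (Q *\<^sub>v w) $ i)"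
      using sub i P Q r by (intro mult_left_mono) (auto simp: less_eq_vec_def)
    moreover have "r * (P *\<^sub>v w) $ i \<le> (P *\<^sub>v w) $ i"
      using mult_mat_vec_nonneg[OF P(1) w(1) P(2) w(2)] r i
      by (intro mult_left_le_one_le) (auto simp: less_eq_vec_def)
    ultimately show "(r \<cdot>\<^sub>v (r \<cdot>\<^sub>v w)) $ i \<le> (P *\<^sub>v w + r \<cdot>\<^sub>v (Q *\<^sub>v w)) $ i"
      using i P Q w(1) by (simp add: algebra_simps)
  qed (use Q w(1) in simp)
  moreover have "four_block_mat (0\<^sub>m n n) (1\<^sub>m n) P Q *\<^sub>v (w @\<^sub>v r \<cdot>\<^sub>v w)
      = (r \<cdot>\<^sub>v w) @\<^sub>v (P *\<^sub>v w + r \<cdot>\<^sub>v (Q *\<^sub>v w))"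
    using P Q w by (subst four_block_mat_mult_vec[of _ n n]) (auto simp: mult_mat_vec)
  ultimately show ?thesis
    unfolding append_vec_smult[OF w(1)] using w by (simp add: append_vec_le)
qed

lemma rho_real_companion_ge:
  fixes P Q :: "real mat"
  assumes P: "P \<in> carrier_mat n n" "0\<^sub>m n n \<le> P" and Q: "Q \<in> carrier_mat n n" "0\<^sub>m n n \<le> Q"
    and n: "0 < n" and le_1: "rho_real (P + Q) \<le> 1"
  shows "rho_real (P + Q) \<le> rho_real (four_block_mat (0\<^sub>m n n) (1\<^sub>m n) P Q)"
proof -
  define r where "r = rho_real (P + Q)"
  have PQ: "P + Q \<in> carrier_mat n n" "0\<^sub>m n n \<le> P + Q"
    using P Q by (auto simp: less_eq_mat_def)
  have r: "0 \<le> r" "r \<le> 1" using rho_real_nonneg[OF PQ(1) n] le_1 unfolding r_def by auto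
  obtain w where w: "w \<in> carrier_vec n" "0\<^sub>v n \<le> w" "w \<noteq> 0\<^sub>v n"
    and sub: "r \<cdot>\<^sub>v w \<le> P *\<^sub>v w + Q *\<^sub>v w"
    using nonneg_mat_sub_eigenvector[OF PQ n] P Q unfolding r_def
    by (metis add_mult_distrib_mat_vec)
  have "w @\<^sub>v r \<cdot>\<^sub>v w \<noteq> 0\<^sub>v (n + n)"
  proof
    assume "w @\<^sub>v r \<cdot>\<^sub>v w = 0\<^sub>v (n + n)"
    also have "\<dots> = 0\<^sub>v n @\<^sub>v 0\<^sub>v n" by auto
    finally show False using w(1,3) by simp
  qed
  then have z: "w @\<^sub>v r \<cdot>\<^sub>v w \<in> carrier_vec (n + n)" "0\<^sub>v (n + n) \<le> w @\<^sub>v r \<cdot>\<^sub>v w"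
    "w @\<^sub>v r \<cdot>\<^sub>v w \<noteq> 0\<^sub>v (n + n)"
    using w r by (auto simp: less_eq_vec_def)
  have "four_block_mat (0\<^sub>m n n) (1\<^sub>m n) P Q \<in> carrier_mat (n + n) (n + n)"
    "0\<^sub>m (n + n) (n + n) \<le> four_block_mat (0\<^sub>m n n) (1\<^sub>m n) P Q"
    using P Q by (auto simp: less_eq_mat_def)
  from collatz_wielandt_le_rho_real[OF this z companion_mat_sub_eigenvector[OF P Q(1) w(1,2) r sub]]
  show ?thesis unfolding r_def .
qed

theorem proposition2:
  fixes n :: nat and Lam W1 W2 :: "real mat"
  assumes Lam: "Lam \<in> carrier_mat n n"
    and W1: "W1 \<in> carrier_mat n n"
    and W2: "W2 \<in> carrier_mat n n"
    and Lam_diag: "diagonal_mat Lam"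
    and Lam_range: "\<forall>i<n. 0 \<le> Lam $$ (i, i) \<and> Lam $$ (i, i) \<le> 1"
    and W1_nonneg: "\<forall>i<n. \<forall>j<n. 0 \<le> W1 $$ (i, j)"
    and W2_nonneg: "\<forall>i<n. \<forall>j<n. 0 \<le> W2 $$ (i, j)"
    and row_stoch: "\<forall>i<n. (\<Sum>j<n. (W1 + W2) $$ (i, j)) = 1"
  shows "rho_real (FJMM_mat n Lam W1 W2) \<ge> rho_real (FJ_mat Lam W1 W2)"
proof (cases "n = 0")
  case True
  then have "FJMM_mat n Lam W1 W2 = FJ_mat Lam W1 W2"
    using Lam W1 W2 unfolding FJMM_mat_def FJ_mat_def by (intro eq_matI) auto
  then show ?thesis by simp
next
  case False
  then have n: "0 < n" by simp
  have Lam_nonneg: "0\<^sub>m n n \<le> Lam" using diagonal_mat_nonneg[OF Lam Lam_diag] Lam_range by simp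
  have W_nonneg: "0\<^sub>m n n \<le> W1" "0\<^sub>m n n \<le> W2" "0\<^sub>m n n \<le> W1 + W2"
    using W1 W2 W1_nonneg W2_nonneg by (auto simp: less_eq_mat_def)
  have "rho_real (FJ_mat Lam W1 W2) \<le> 1"
    unfolding FJ_mat_def using Lam Lam_diag Lam_range W1 W2 W_nonneg(3) row_stoch n
    by (intro rho_real_diagonal_mult_stochastic_le_1) auto
  moreover have "FJ_mat Lam W1 W2 = Lam * W2 + Lam * W1"
    using Lam W1 W2 unfolding FJ_mat_def by (simp add: mult_add_distrib_mat comm_add_mat[of _ n n])
  ultimately show ?thesis
    unfolding FJMM_mat_def
    using rho_real_companion_ge[OF _ mult_mat_nonneg[OF Lam W2 Lam_nonneg W_nonneg(2)]
        _ mult_mat_nonneg[OF Lam W1 Lam_nonneg W_nonneg(1)] n] Lam W1 W2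
    by simp
qed

end
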